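(* Let $G$ be an $l$-group with left Haar measure $dg$, $V$ a smooth $G$-module and $n\ge1$. Define $T_n:C_c^\infty(G^{n+1},V)\to C_c^\infty(G^n,V)$ by $$(T_nf)(g_1,\dots,g_n)=\int_Gg^{-1}f(g,gg_1,gg_1g_2,\dots,gg_1\cdots g_n)\,dg.$$ Then $T_n$ is surjective and its kernel is spanned by the elements $g.f-f$, $g\in G$, $f\in C_c^\infty(G^{n+1},V)$, where $(g.f)(g_0,\dots,g_n)=g\,f(g^{-1}g_0,\dots,g^{-1}g_n)$.
   Context: An $l$-group: locally compact group, countable at infinity, with a basis of neighbourhoods of $e$ of compact open subgroups. Smooth module: every vector fixed by a compact open subgroup. $C_c^\infty(Y,V)$: locally constant compactly supported functions $Y\to V$. *)

theory Defs
  imports "HOL-Analysis.Analysis" "HOL-Library.Function_Algebras"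
begin

text \<open>The group G is a type 'g of class topological_group_add (a not necessarily
commutative topological group, written additively: g + h is the product gh,
- g the inverse, 0 the identity).\<close>

definition is_subgroup :: "'g::group_add set \<Rightarrow> bool" where
  "is_subgroup K \<longleftrightarrow> 0 \<in> K \<and> (\<forall>a\<in>K. \<forall>b\<in>K. a + b \<in> K) \<and> (\<forall>a\<in>K. - a \<in> K)"

definition l_group :: "'g::{topological_group_add,t2_space} itself \<Rightarrow> bool" where
  "l_group _ \<longleftrightarrow>
     (\<forall>x::'g. \<exists>U K. open U \<and> compact K \<and> x \<in> U \<and> U \<subseteq> K) \<and>
     (\<exists>C::nat \<Rightarrow> 'g set. (\<forall>i. compact (C i)) \<and> (\<Union>i. C i) = UNIV) \<and>
     (\<forall>U::'g set. open U \<and> 0 \<in> U \<longrightarrow>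
        (\<exists>K. compact K \<and> open K \<and> is_subgroup K \<and> K \<subseteq> U))"

definition left_haar_measure :: "'g::topological_group_add measure \<Rightarrow> bool" where
  "left_haar_measure M \<longleftrightarrow>
     sets M = sets borel \<and>
     (\<forall>g. \<forall>A\<in>sets M. emeasure M ((+) g ` A) = emeasure M A) \<and>
     (\<forall>K. compact K \<longrightarrow> emeasure M K < \<infinity>) \<and>
     (\<forall>U. open U \<and> U \<noteq> {} \<longrightarrow> emeasure M U > 0) \<and>
     (\<forall>A\<in>sets M. emeasure M A = (INF U\<in>{U. open U \<and> A \<subseteq> U}. emeasure M U)) \<and>
     (\<forall>U. open U \<longrightarrow> emeasure M U = (SUP K\<in>{K. compact K \<and> K \<subseteq> U}. emeasure M K))"

definition smooth_module :: "(complex \<Rightarrow> 'v::ab_group_add \<Rightarrow> 'v) \<Rightarrow> ('g::{topological_group_add} \<Rightarrow> 'v \<Rightarrow> 'v) \<Rightarrow> bool" where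
  "smooth_module sc act \<longleftrightarrow>
     vector_space sc \<and>
     (\<forall>g. Vector_Spaces.linear sc sc (act g)) \<and>
     (\<forall>v. act 0 v = v) \<and>
     (\<forall>g h v. act (g + h) v = act g (act h v)) \<and>
     (\<forall>v. \<exists>K. compact K \<and> open K \<and> is_subgroup K \<and> (\<forall>k\<in>K. act k v = v))"

text \<open>C_c^infty(Y,V): locally constant, compactly supported functions on the
topological space Y (extended by 0 outside the carrier).\<close>
definition Cc_infty :: "'a topology \<Rightarrow> ('a \<Rightarrow> 'v::zero) set" where
  "Cc_infty Y = {f.
     (\<forall>y\<in>topspace Y. \<exists>U. openin Y U \<and> y \<in> U \<and> (\<forall>z\<in>U. f z = f y)) \<and>
     (\<exists>K. compactin Y K \<and> (\<forall>y\<in>topspace Y - K. f y = 0)) \<and>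
     (\<forall>y. y \<notin> topspace Y \<longrightarrow> f y = 0)}"

text \<open>G^n as functions on {0..<n} with the product topology.\<close>
abbreviation Gpow :: "nat \<Rightarrow> (nat \<Rightarrow> 'g::topological_space) topology" where
  "Gpow n \<equiv> product_topology (\<lambda>_. euclidean) {..<n}"

text \<open>Integral of a locally constant compactly supported V-valued function
(a simple function): sum over its nonzero values v of measure(f^{-1}(v)) v.\<close>
definition haar_int :: "(complex \<Rightarrow> 'v::ab_group_add \<Rightarrow> 'v) \<Rightarrow> 'g measure \<Rightarrow> ('g \<Rightarrow> 'v) \<Rightarrow> 'v" where
  "haar_int sc M f = (\<Sum>v\<in>range f - {0}. sc (complex_of_real (measure M (f -` {v}))) v)"

text \<open>Prefix products: pprod x i = x_1 ... x_i (x_1 is stored at index 0).\<close>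
fun pprod :: "(nat \<Rightarrow> 'g::monoid_add) \<Rightarrow> nat \<Rightarrow> 'g" where
  "pprod x 0 = 0"
| "pprod x (Suc i) = pprod x i + x i"

definition T_op :: "(complex \<Rightarrow> 'v::ab_group_add \<Rightarrow> 'v) \<Rightarrow> 'g::topological_group_add measure \<Rightarrow> ('g \<Rightarrow> 'v \<Rightarrow> 'v)
    \<Rightarrow> nat \<Rightarrow> ((nat \<Rightarrow> 'g) \<Rightarrow> 'v) \<Rightarrow> (nat \<Rightarrow> 'g) \<Rightarrow> 'v" where
  "T_op sc M act n f x =
     (if x \<in> topspace (Gpow n)
      then haar_int sc M (\<lambda>g. act (- g) (f (restrict (\<lambda>i. g + pprod x i) {..<Suc n})))
      else 0)"

definition G_act_fun :: "('g::topological_group_add \<Rightarrow> 'v::ab_group_add \<Rightarrow> 'v) \<Rightarrow> nat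
    \<Rightarrow> 'g \<Rightarrow> ((nat \<Rightarrow> 'g) \<Rightarrow> 'v) \<Rightarrow> (nat \<Rightarrow> 'g) \<Rightarrow> 'v" where
  "G_act_fun act m g f x =
     (if x \<in> topspace (Gpow m) then act g (f (restrict (\<lambda>i. - g + x i) {..<m})) else 0)"

abbreviation fun_cspan :: "(complex \<Rightarrow> 'v::ab_group_add \<Rightarrow> 'v) \<Rightarrow> ('a \<Rightarrow> 'v) set \<Rightarrow> ('a \<Rightarrow> 'v) set" where
  "fun_cspan sc S \<equiv> module.span (\<lambda>c f x. sc c (f x)) S"

end

(*
  In homogeneous coordinates y_0 = g, y_i = g x_1 ... x_i the integrand of T_n f at x is
  Psi(g, x) = g^-1 f(g, g x_1, ..., g x_1 ... x_n), a locally constant function on G x G^n that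
  vanishes off a compact set.  As the compact open subgroups form a neighbourhood basis of 1, one
  compact open subgroup K makes every Psi(-, x) right K-invariant, so the integral is the finite
  sum T_n f (x) = mu(K) sum_{a in A} Psi(a, x) over representatives A of finitely many cosets aK.
  Hence T_n f is again locally constant with compact support, and T_n is linear; left invariance
  of the Haar measure gives T_n (h.f) = T_n f.  The function
  mu(K)^-1 1_K(y_0) y_0 phi(y_0^-1 y_1, ..., y_(n-1)^-1 y_n) is a preimage of phi.
  Conversely, if T_n f = 0, split f = sum_a f_a according to the coset aK containing y_0 and put
  h_a = a^-1.f_a.  Then f = sum_a (a.h_a - h_a) + sum_a h_a, and T_n f = 0 says exactly that
  sum_a h_a = 0.
*)

theory Submission
  imports Defs
begin

section \<open>Locally constant functions\<close>

definition locally_constant :: "'a topology \<Rightarrow> ('a \<Rightarrow> 'b) \<Rightarrow> bool" where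
  "locally_constant X f \<longleftrightarrow> (\<forall>y\<in>topspace X. \<exists>U. openin X U \<and> y \<in> U \<and> (\<forall>z\<in>U. f z = f y))"

lemma Cc_infty_iff:
  "f \<in> Cc_infty X \<longleftrightarrow> locally_constant X f \<and> (\<exists>K. compactin X K \<and> (\<forall>y\<in>topspace X - K. f y = 0))
     \<and> (\<forall>y. y \<notin> topspace X \<longrightarrow> f y = 0)"
  by (simp add: Cc_infty_def locally_constant_def)

lemma locally_constant_const: "locally_constant X (\<lambda>x. c)"
  unfolding locally_constant_def by auto

lemma locally_constant_compose:
  assumes "locally_constant Y f" "continuous_map X Y h"
  shows "locally_constant X (\<lambda>x. f (h x))"
  unfolding locally_constant_def
proof
  fix y assume y: "y \<in> topspace X"
  then have "h y \<in> topspace Y"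
    using assms(2) continuous_map_image_subset_topspace by blast
  then obtain U where U: "openin Y U" "h y \<in> U" "\<forall>z\<in>U. f z = f (h y)"
    using assms(1) unfolding locally_constant_def by blast
  have "openin X {x \<in> topspace X. h x \<in> U}"
    using openin_continuous_map_preimage[OF assms(2) U(1)] .
  moreover have "y \<in> {x \<in> topspace X. h x \<in> U}"
    using y U(2) by blast
  ultimately show "\<exists>U. openin X U \<and> y \<in> U \<and> (\<forall>z\<in>U. f (h z) = f (h y))"
    using U(3) by blast
qed

lemma locally_constant_binop:
  assumes "locally_constant X f" "locally_constant X g"
  shows "locally_constant X (\<lambda>x. H (f x) (g x))"
  unfolding locally_constant_def
proof
  fix y assume y: "y \<in> topspace X"
  obtain U where U: "openin X U" "y \<in> U" "\<forall>z\<in>U. f z = f y"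
    using assms(1) y unfolding locally_constant_def by blast
  obtain V where V: "openin X V" "y \<in> V" "\<forall>z\<in>V. g z = g y"
    using assms(2) y unfolding locally_constant_def by blast
  have "openin X (U \<inter> V)"
    using U(1) V(1) by blast
  moreover have "H (f z) (g z) = H (f y) (g y)" if "z \<in> U \<inter> V" for z
    using that U(3) V(3) by (metis IntD1 IntD2)
  ultimately show "\<exists>W. openin X W \<and> y \<in> W \<and> (\<forall>z\<in>W. H (f z) (g z) = H (f y) (g y))"
    using U(2) V(2) by blast
qed

lemma locally_constant_sum:
  assumes "finite A" "\<And>a. a \<in> A \<Longrightarrow> locally_constant X (f a)"
  shows "locally_constant X (\<lambda>x. \<Sum>a\<in>A. f a x)"
  using assms
proof (induction A rule: finite_induct)
  case empty
  then show ?case by (simp add: locally_constant_const)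
next
  case (insert a A)
  then have "locally_constant X (f a)" "locally_constant X (\<lambda>x. \<Sum>a\<in>A. f a x)"
    by simp_all
  then have "locally_constant X (\<lambda>x. f a x + (\<Sum>a\<in>A. f a x))"
    by (rule locally_constant_binop)
  with insert.hyps show ?case by simp
qed

lemma locally_constant_cong:
  assumes "locally_constant X f" "\<And>x. x \<in> topspace X \<Longrightarrow> g x = f x"
  shows "locally_constant X g"
  unfolding locally_constant_def
proof
  fix y assume y: "y \<in> topspace X"
  then obtain U where U: "openin X U" "y \<in> U" "\<forall>z\<in>U. f z = f y"
    using assms(1) unfolding locally_constant_def by blast
  moreover have "U \<subseteq> topspace X"
    using U(1) by (rule openin_subset)
  ultimately show "\<exists>U. openin X U \<and> y \<in> U \<and> (\<forall>z\<in>U. g z = g y)"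
    using assms(2) y by (metis subsetD)
qed

lemma open_vimage_locally_constant:
  assumes "locally_constant euclidean f"
  shows "open (f -` {v})"
proof (subst open_subopen, intro ballI)
  fix y assume "y \<in> f -` {v}"
  with assms obtain U where "open U" "y \<in> U" "\<forall>z\<in>U. f z = f y"
    unfolding locally_constant_def by (metis UNIV_I open_openin topspace_euclidean)
  with \<open>y \<in> f -` {v}\<close> show "\<exists>T. open T \<and> y \<in> T \<and> T \<subseteq> f -` {v}"
    by (metis subsetI vimage_singleton_eq)
qed

lemma Cc_infty_binop:
  assumes "f \<in> Cc_infty X" "g \<in> Cc_infty X" "H 0 0 = 0"
  shows "(\<lambda>x. H (f x) (g x)) \<in> Cc_infty X"
proof -
  obtain K1 where K1: "compactin X K1" "\<forall>y\<in>topspace X - K1. f y = 0"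
    using assms(1) unfolding Cc_infty_iff by blast
  obtain K2 where K2: "compactin X K2" "\<forall>y\<in>topspace X - K2. g y = 0"
    using assms(2) unfolding Cc_infty_iff by blast
  have "locally_constant X (\<lambda>x. H (f x) (g x))"
    using assms(1,2) unfolding Cc_infty_iff by (blast intro: locally_constant_binop)
  moreover have "compactin X (K1 \<union> K2)"
    using K1 K2 by (simp add: compactin_Un)
  ultimately show ?thesis
    using assms K1(2) K2(2) unfolding Cc_infty_iff by (intro conjI exI[of _ "K1 \<union> K2"]) auto
qed

lemma Cc_infty_restrict:
  assumes "f \<in> Cc_infty X" "locally_constant X P"
  shows "(\<lambda>y. if P y then f y else 0) \<in> Cc_infty X"
proof -
  obtain K where K: "compactin X K" "\<forall>y\<in>topspace X - K. f y = 0"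
    using assms(1) unfolding Cc_infty_iff by blast
  have "locally_constant X (\<lambda>y. if P y then f y else 0)"
    using assms locally_constant_binop[of X P f "\<lambda>b v. if b then v else 0"]
    unfolding Cc_infty_iff by blast
  with assms K show ?thesis
    unfolding Cc_infty_iff by (intro conjI exI[of _ K]) auto
qed

lemma zero_in_Cc_infty: "(\<lambda>_. 0) \<in> Cc_infty X"
  unfolding Cc_infty_iff by (intro conjI exI[of _ "{}"] locally_constant_const) auto

section \<open>Compact open subgroups and their cosets\<close>

definition compact_open_subgroup :: "'g::topological_group_add set \<Rightarrow> bool" where
  "compact_open_subgroup K \<longleftrightarrow> compact K \<and> open K \<and> is_subgroup K"

lemma is_subgroupD:
  assumes "is_subgroup K"
  shows "0 \<in> K" "a \<in> K \<Longrightarrow> b \<in> K \<Longrightarrow> a + b \<in> K" "a \<in> K \<Longrightarrow> - a \<in> K"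
  using assms by (auto simp: is_subgroup_def)

lemma subgroup_add_right_iff:
  assumes "is_subgroup K" "k \<in> K"
  shows "g + k \<in> K \<longleftrightarrow> g \<in> K"
proof
  assume "g + k \<in> K"
  then have "(g + k) + - k \<in> K"
    using assms is_subgroupD by blast
  then show "g \<in> K"
    by (simp add: add.assoc)
qed (use assms is_subgroupD in blast)

lemma mem_coset_iff: "(x::'g::group_add) \<in> (+) a ` K \<longleftrightarrow> - a + x \<in> K"
  by (metis add_minus_cancel image_iff minus_add_cancel)

lemma coset_eq:
  assumes "is_subgroup K" "(x::'g::group_add) \<in> (+) a ` K"
  shows "(+) x ` K = (+) a ` K"
proof (rule set_eqI)
  have k: "- a + x \<in> K" "- (- a + x) \<in> K"
    using assms by (auto simp: mem_coset_iff is_subgroupD)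
  fix y
  have "- a + y = (- a + x) + (- x + y)" "- x + y = - (- a + x) + (- a + y)"
    by (simp_all add: add.assoc minus_add)
  then show "y \<in> (+) x ` K \<longleftrightarrow> y \<in> (+) a ` K"
    unfolding mem_coset_iff using is_subgroupD(2)[OF assms(1)] k by metis
qed

lemma open_coset:
  fixes K :: "'g::topological_group_add set"
  assumes "open K"
  shows "open ((+) a ` K)"
proof -
  have "continuous_on UNIV (\<lambda>x. - a + x)"
    by (intro continuous_intros)
  with assms have "open ((\<lambda>x. - a + x) -` K)"
    by (simp add: continuous_on_open_vimage)
  moreover have "(+) a ` K = (\<lambda>x. - a + x) -` K"
    by (auto simp: mem_coset_iff)
  ultimately show ?thesis by simp
qed

lemma compact_coset: "compact K \<Longrightarrow> compact ((+) (a::'g::topological_group_add) ` K)"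
  by (rule compact_continuous_image) (intro continuous_intros)

lemma compact_open_subgroup_Inter:
  fixes \<K> :: "'g::{topological_group_add,t2_space} set set"
  assumes "finite \<K>" "\<K> \<noteq> {}" "\<And>K. K \<in> \<K> \<Longrightarrow> compact_open_subgroup K"
  shows "compact_open_subgroup (\<Inter>\<K>)"
proof -
  obtain K0 where "K0 \<in> \<K>"
    using assms(2) by blast
  then have "compact (K0 \<inter> \<Inter>\<K>)"
    using assms(3) by (intro compact_Int_closed closed_Inter) (auto simp: compact_open_subgroup_def compact_imp_closed)
  moreover have "K0 \<inter> \<Inter>\<K> = \<Inter>\<K>"
    using \<open>K0 \<in> \<K>\<close> by blast
  ultimately show ?thesis
    using assms by (auto simp: compact_open_subgroup_def is_subgroup_def)
qed

lemma ex_compact_open_subgroup: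
  assumes "l_group TYPE('g::{topological_group_add,t2_space})" "open U" "(0::'g) \<in> U"
  obtains K where "compact_open_subgroup K" "K \<subseteq> U"
  using assms unfolding l_group_def compact_open_subgroup_def by blast

lemma locally_constant_mem_coset:
  fixes K :: "'g::topological_group_add set"
  assumes "open K" "is_subgroup K" "continuous_map X euclidean h"
  shows "locally_constant X (\<lambda>x. h x \<in> (+) a ` K)"
  unfolding locally_constant_def
proof
  fix y assume y: "y \<in> topspace X"
  let ?U = "{x \<in> topspace X. h x \<in> (+) (h y) ` K}"
  have "openin X ?U"
    using openin_continuous_map_preimage[OF assms(3), of "(+) (h y) ` K"] open_coset[OF assms(1)]
    by simp
  moreover have "y \<in> ?U"
    using y is_subgroupD(1)[OF assms(2)] by (simp add: mem_coset_iff)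
  moreover have "h z \<in> (+) a ` K \<longleftrightarrow> h y \<in> (+) a ` K" if "z \<in> ?U" for z
  proof -
    have "(+) (h z) ` K = (+) (h y) ` K"
      using that coset_eq[OF assms(2)] by blast
    moreover have "w \<in> (+) w ` K" for w
      using is_subgroupD(1)[OF assms(2)] by (simp add: mem_coset_iff)
    ultimately show ?thesis
      using coset_eq[OF assms(2)] by metis
  qed
  ultimately show "\<exists>U. openin X U \<and> y \<in> U \<and> (\<forall>z\<in>U. (h z \<in> (+) a ` K) = (h y \<in> (+) a ` K))"
    by blast
qed

lemma compact_disjoint_coset_cover:
  fixes K :: "'g::topological_group_add set"
  assumes "compact S" "open K" "is_subgroup K"
  obtains A where "finite A" "S \<subseteq> (\<Union>a\<in>A. (+) a ` K)" "disjoint_family_on (\<lambda>a. (+) a ` K) A"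
proof -
  define F where "F a = (+) a ` K" for a
  have "S \<subseteq> (\<Union>a\<in>S. F a)"
    using is_subgroupD(1)[OF assms(3)] by (auto simp: F_def mem_coset_iff)
  then obtain A0 where A0: "finite A0" "S \<subseteq> (\<Union>a\<in>A0. F a)"
    using compactE_image[OF assms(1)] open_coset[OF assms(2)] unfolding F_def by metis
  \<comment> \<open>one representative in \<open>A0\<close> for each of the cosets it meets\<close>
  define A where "A = inv_into A0 F ` F ` A0"
  have F_rep: "F (inv_into A0 F C) = C" if "C \<in> F ` A0" for C
    using that by (rule f_inv_into_f)
  have "finite A"
    using A0(1) by (simp add: A_def)
  moreover have "(\<Union>a\<in>A. F a) = (\<Union>a\<in>A0. F a)"
    unfolding A_def using F_rep by auto
  moreover have "disjoint_family_on F A"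
    unfolding disjoint_family_on_def
  proof (intro ballI impI)
    fix a b assume "a \<in> A" "b \<in> A" "a \<noteq> b"
    then have "F a \<noteq> F b"
      unfolding A_def using F_rep by auto
    then show "F a \<inter> F b = {}"
      using coset_eq[OF assms(3)] unfolding F_def by blast
  qed
  ultimately show ?thesis
    using that A0(2) unfolding F_def by auto
qed

lemma sum_fun_apply: "(\<Sum>a\<in>A. f a) y = (\<Sum>a\<in>A. f a y)"
  by (induction A rule: infinite_finite_induct) auto

lemma sum_coset_parts:
  assumes "finite A" "disjoint_family_on B A" "\<And>y. f y \<noteq> 0 \<Longrightarrow> p y \<in> (\<Union>a\<in>A. B a)"
  shows "(\<Sum>a\<in>A. (\<lambda>y. if p y \<in> B a then f y else 0)) = (f :: 'a \<Rightarrow> 'b::comm_monoid_add)"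
proof
  fix y
  have "(\<Sum>a\<in>A. if p y \<in> B a then f y else 0) = f y"
  proof (cases "f y = 0")
    case False
    then obtain a where a: "a \<in> A" "p y \<in> B a"
      using assms(3) by blast
    with assms(2) have "{b \<in> A. p y \<in> B b} = {a}"
      unfolding disjoint_family_on_def by blast
    then show ?thesis
      using sum.inter_filter[OF assms(1), of "\<lambda>_. f y" "\<lambda>b. p y \<in> B b"] by simp
  qed (simp add: sum.neutral)
  then show "(\<Sum>a\<in>A. (\<lambda>y. if p y \<in> B a then f y else 0)) y = f y"
    by (simp add: sum_fun_apply)
qed

section \<open>Uniform local constancy\<close>

lemma locally_constant_product_box:
  fixes \<Phi> :: "'g::{topological_group_add,t2_space} \<times> 'a \<Rightarrow> 'b"
  assumes "l_group TYPE('g)" "locally_constant (prod_topology euclidean Y) \<Phi>"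
    and "p \<in> topspace (prod_topology euclidean Y)"
  obtains K V where "compact_open_subgroup K" "openin Y V" "p \<in> (+) (fst p) ` K \<times> V"
    "\<And>g x k. (g, x) \<in> (+) (fst p) ` K \<times> V \<Longrightarrow> k \<in> K \<Longrightarrow> \<Phi> (g + k, x) = \<Phi> (g, x)"
proof -
  obtain W where W: "openin (prod_topology euclidean Y) W" "p \<in> W" "\<forall>z\<in>W. \<Phi> z = \<Phi> p"
    using assms(2,3) unfolding locally_constant_def by blast
  obtain U V where UV: "open U" "openin Y V" "fst p \<in> U" "snd p \<in> V" "U \<times> V \<subseteq> W"
    using W(1,2) unfolding openin_prod_topology_alt by (metis open_openin prod.collapse)
  have "open ((+) (- fst p) ` U)" "0 \<in> (+) (- fst p) ` U"
    using UV(1,3) by (simp_all add: open_coset mem_coset_iff)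
  then obtain K where K: "compact_open_subgroup K" "K \<subseteq> (+) (- fst p) ` U"
    using ex_compact_open_subgroup[OF assms(1)] by metis
  then have "is_subgroup K"
    unfolding compact_open_subgroup_def by blast
  have box: "\<Phi> (fst p + k, x) = \<Phi> p" if "k \<in> K" "x \<in> V" for k x
  proof -
    have "fst p + k \<in> U"
      using subsetD[OF K(2) \<open>k \<in> K\<close>] by (simp add: mem_coset_iff)
    with \<open>x \<in> V\<close> UV(5) have "(fst p + k, x) \<in> W"
      by blast
    then show ?thesis
      using W(3) by blast
  qed
  show thesis
  proof (rule that[OF K(1) UV(2)])
    show "p \<in> (+) (fst p) ` K \<times> V"
      using UV(4) is_subgroupD(1)[OF \<open>is_subgroup K\<close>] by (auto simp: mem_Times_iff mem_coset_iff)
    fix g x k assume "(g, x) \<in> (+) (fst p) ` K \<times> V" "k \<in> K"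
    then obtain k' where "k' \<in> K" "g = fst p + k'" "x \<in> V"
      by blast
    moreover have "k' + k \<in> K"
      using \<open>is_subgroup K\<close> \<open>k' \<in> K\<close> \<open>k \<in> K\<close> by (rule is_subgroupD(2))
    ultimately have "\<Phi> (fst p + (k' + k), x) = \<Phi> p" "\<Phi> (fst p + k', x) = \<Phi> p"
      using box by blast+
    with \<open>g = fst p + k'\<close> show "\<Phi> (g + k, x) = \<Phi> (g, x)"
      by (simp add: add.assoc)
  qed
qed

text \<open>Cover the compact set by finitely many boxes \<open>(p + K\<^sub>p) \<times> V\<^sub>p\<close> and intersect the \<open>K\<^sub>p\<close>.\<close>

lemma right_invariant_on_compact:
  fixes \<Phi> :: "'g::{topological_group_add,t2_space} \<times> 'a \<Rightarrow> 'b"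
  assumes lg: "l_group TYPE('g)" and lc: "locally_constant (prod_topology euclidean Y) \<Phi>"
    and C: "compactin (prod_topology euclidean Y) C"
  obtains K where "compact_open_subgroup K"
    "\<And>g x k. (g, x) \<in> C \<Longrightarrow> k \<in> K \<Longrightarrow> \<Phi> (g + k, x) = \<Phi> (g, x)"
proof -
  have "\<exists>K V. compact_open_subgroup K \<and> openin Y V \<and> p \<in> (+) (fst p) ` K \<times> V
      \<and> (\<forall>g x k. (g, x) \<in> (+) (fst p) ` K \<times> V \<longrightarrow> k \<in> K \<longrightarrow> \<Phi> (g + k, x) = \<Phi> (g, x))"
    if "p \<in> C" for p
  proof -
    have "p \<in> topspace (prod_topology euclidean Y)"
      using C that compactin_subset_topspace by blast
    from locally_constant_product_box[OF lg lc this] show ?thesis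
      by metis
  qed
  then obtain Kp Vp where KV: "\<And>p. p \<in> C \<Longrightarrow> compact_open_subgroup (Kp p)"
      "\<And>p. p \<in> C \<Longrightarrow> openin Y (Vp p)" "\<And>p. p \<in> C \<Longrightarrow> p \<in> (+) (fst p) ` Kp p \<times> Vp p"
      "\<And>p g x k. p \<in> C \<Longrightarrow> (g, x) \<in> (+) (fst p) ` Kp p \<times> Vp p \<Longrightarrow> k \<in> Kp p
        \<Longrightarrow> \<Phi> (g + k, x) = \<Phi> (g, x)"
    by metis
  define B where "B p = (+) (fst p) ` Kp p \<times> Vp p" for p
  have "openin (prod_topology euclidean Y) (B p)" if "p \<in> C" for p
    using open_coset KV(1,2)[OF that] unfolding B_def openin_prod_Times_iff
    by (auto simp: compact_open_subgroup_def)
  moreover have "C \<subseteq> \<Union>(B ` C)"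
    using KV(3) unfolding B_def by blast
  ultimately obtain \<F> where "finite \<F>" "\<F> \<subseteq> B ` C" "C \<subseteq> \<Union>\<F>"
    using compactinD[OF C, of "B ` C"] by blast
  then obtain P where P: "P \<subseteq> C" "finite P" "C \<subseteq> \<Union>(B ` P)"
    by (metis finite_subset_image)
  obtain K0 :: "'g set" where K0: "compact_open_subgroup K0"
    using ex_compact_open_subgroup[OF lg open_UNIV UNIV_I] by metis
  define K where "K = \<Inter>(insert K0 (Kp ` P))"
  have K: "compact_open_subgroup K"
    unfolding K_def using P KV(1) K0 by (intro compact_open_subgroup_Inter) auto
  show thesis
  proof (rule that[OF K])
    fix g x k assume "(g, x) \<in> C" "k \<in> K"
    then obtain p where "p \<in> P" "(g, x) \<in> B p" "k \<in> Kp p"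
      using P(3) unfolding K_def by blast
    with P(1) KV(4) show "\<Phi> (g + k, x) = \<Phi> (g, x)"
      unfolding B_def by blast
  qed
qed

lemma uniformly_locally_constant:
  fixes \<Phi> :: "'g::{topological_group_add,t2_space} \<times> 'a \<Rightarrow> 'b::zero"
  assumes "l_group TYPE('g)" "locally_constant (prod_topology euclidean Y) \<Phi>"
    and "compactin (prod_topology euclidean Y) C"
    and zero: "\<And>g x. x \<in> topspace Y \<Longrightarrow> (g, x) \<notin> C \<Longrightarrow> \<Phi> (g, x) = 0"
  obtains K where "compact_open_subgroup K"
    "\<And>g x k. x \<in> topspace Y \<Longrightarrow> k \<in> K \<Longrightarrow> \<Phi> (g + k, x) = \<Phi> (g, x)"
proof -
  obtain K where K: "compact_open_subgroup K"
    and inv_on_C: "\<And>g x k. (g, x) \<in> C \<Longrightarrow> k \<in> K \<Longrightarrow> \<Phi> (g + k, x) = \<Phi> (g, x)"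
    using right_invariant_on_compact[OF assms(1-3)] by blast
  show thesis
  proof (rule that[OF K])
    fix g x k assume x: "x \<in> topspace Y" and k: "k \<in> K"
    consider "(g, x) \<in> C" | "(g + k, x) \<in> C" | "(g, x) \<notin> C" "(g + k, x) \<notin> C"
      by blast
    then show "\<Phi> (g + k, x) = \<Phi> (g, x)"
    proof cases
      case 1
      then show ?thesis
        using inv_on_C k by blast
    next
      case 2
      have "- k \<in> K"
        using K k by (simp add: compact_open_subgroup_def is_subgroupD)
      from inv_on_C[OF 2 this] show ?thesis
        by (simp add: add.assoc)
    next
      case 3
      then show ?thesis
        using zero[OF x] by simp
    qed
  qed
qed

lemma Cc_infty_right_invariant:
  fixes \<phi> :: "'g::{topological_group_add,t2_space} \<Rightarrow> 'b::zero"
  assumes "l_group TYPE('g)" "\<phi> \<in> Cc_infty euclidean"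
  obtains K where "compact_open_subgroup K" "\<And>g k. k \<in> K \<Longrightarrow> \<phi> (g + k) = \<phi> g"
proof -
  let ?Y = "discrete_topology {()}"
  obtain S where S: "compact S" "\<And>g. g \<notin> S \<Longrightarrow> \<phi> g = 0"
    using assms(2) unfolding Cc_infty_iff by auto
  have lc: "locally_constant (prod_topology euclidean ?Y) (\<lambda>p. \<phi> (fst p))"
    using assms(2) continuous_map_fst unfolding Cc_infty_iff by (blast intro: locally_constant_compose)
  have C: "compactin (prod_topology euclidean ?Y) (S \<times> {()})"
    using S(1) by (simp add: compactin_Times)
  have zero: "\<phi> (fst (g, x)) = 0" if "x \<in> topspace ?Y" "(g, x) \<notin> S \<times> {()}" for g x
    using that S(2) by simp
  obtain K where "compact_open_subgroup K"
      "\<And>g x k. x \<in> topspace ?Y \<Longrightarrow> k \<in> K \<Longrightarrow> \<phi> (fst (g + k, x)) = \<phi> (fst (g, x))"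
    using uniformly_locally_constant[OF assms(1) lc C zero] by blast
  with that show thesis
    by simp
qed

section \<open>Integrals of locally constant functions\<close>

lemma left_haar_measureD:
  assumes "left_haar_measure M"
  shows "sets M = sets borel" "\<forall>g. \<forall>A\<in>sets M. emeasure M ((+) g ` A) = emeasure M A"
    and "\<forall>K. compact K \<longrightarrow> emeasure M K < \<infinity>" "\<forall>U. open U \<and> U \<noteq> {} \<longrightarrow> 0 < emeasure M U"
proof -
  note H = assms[unfolded left_haar_measure_def]
  show "sets M = sets borel"
    using H by (elim conjE) assumption
  show "\<forall>g. \<forall>A\<in>sets M. emeasure M ((+) g ` A) = emeasure M A"
    using H by (elim conjE) assumption
  show "\<forall>K. compact K \<longrightarrow> emeasure M K < \<infinity>"
    using H by (elim conjE) assumption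
  show "\<forall>U. open U \<and> U \<noteq> {} \<longrightarrow> 0 < emeasure M U"
    using H by (elim conjE) assumption
qed

lemma left_haar_measure_open_sets: "left_haar_measure M \<Longrightarrow> open A \<Longrightarrow> A \<in> sets M"
  by (simp add: left_haar_measureD(1))

lemma emeasure_compact_finite: "left_haar_measure M \<Longrightarrow> compact K \<Longrightarrow> emeasure M K \<noteq> \<infinity>"
  using left_haar_measureD(3) by fastforce

lemma measure_translate: "left_haar_measure M \<Longrightarrow> A \<in> sets M \<Longrightarrow> measure M ((+) g ` A) = measure M A"
  by (simp add: left_haar_measureD(2) measure_def)

lemma measure_coset:
  "left_haar_measure M \<Longrightarrow> open K \<Longrightarrow> measure M ((+) a ` K) = measure M K"
  by (simp add: measure_translate left_haar_measure_open_sets)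

lemma measure_compact_open_subgroup_pos:
  assumes "left_haar_measure M" "compact_open_subgroup K"
  shows "0 < measure M K"
proof -
  have "emeasure M K \<noteq> \<infinity>"
    using assms emeasure_compact_finite unfolding compact_open_subgroup_def by blast
  moreover have "0 < emeasure M K"
    using assms left_haar_measureD(4) is_subgroupD(1) unfolding compact_open_subgroup_def by blast
  ultimately show ?thesis
    by (simp add: measure_def enn2real_positive_iff less_top)
qed

lemma haar_int_eq_0:
  assumes "\<And>g. \<phi> g = 0"
  shows "haar_int sc M \<phi> = 0"
proof -
  have "range \<phi> - {0} = {}"
    using assms by auto
  then show ?thesis
    unfolding haar_int_def by (simp only: sum.empty)
qed

lemma haar_int_translate:
  fixes \<phi> :: "'g::topological_group_add \<Rightarrow> 'v::ab_group_add"
  assumes "left_haar_measure M" "locally_constant euclidean \<phi>"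
  shows "haar_int sc M (\<lambda>g. \<phi> (- h + g)) = haar_int sc M \<phi>"
proof -
  have "range (\<lambda>g. \<phi> (- h + g)) = range \<phi>"
  proof (intro equalityI subsetI)
    fix v assume "v \<in> range \<phi>"
    then obtain x where "v = \<phi> (- h + (h + x))"
      by auto
    then show "v \<in> range (\<lambda>g. \<phi> (- h + g))"
      by blast
  qed auto
  moreover have "(\<lambda>g. \<phi> (- h + g)) -` {v} = (+) h ` (\<phi> -` {v})" for v
    by (auto simp: mem_coset_iff)
  moreover have "measure M ((+) h ` (\<phi> -` {v})) = measure M (\<phi> -` {v})" for v
    using assms by (intro measure_translate left_haar_measure_open_sets open_vimage_locally_constant)
  ultimately show ?thesis
    unfolding haar_int_def by simp
qed

lemma measure_vimage_right_invariant:
  fixes \<phi> :: "'g::topological_group_add \<Rightarrow> 'b::zero"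
  assumes hm: "left_haar_measure M" and K: "compact_open_subgroup K"
    and A: "finite A" "disjoint_family_on (\<lambda>a. (+) a ` K) A"
    and inv: "\<And>g k. k \<in> K \<Longrightarrow> \<phi> (g + k) = \<phi> g"
    and supp: "\<And>g. \<phi> g \<noteq> 0 \<Longrightarrow> g \<in> (\<Union>a\<in>A. (+) a ` K)"
    and "v \<noteq> 0"
  shows "measure M (\<phi> -` {v}) = (\<Sum>a\<in>{a \<in> A. \<phi> a = v}. measure M K)"
proof -
  have coset_val: "\<phi> g = \<phi> a" if "g \<in> (+) a ` K" for g a
    using that inv by blast
  have vimage: "\<phi> -` {v} = (\<Union>a\<in>{a \<in> A. \<phi> a = v}. (+) a ` K)"
  proof (intro set_eqI iffI)
    fix g assume g: "g \<in> \<phi> -` {v}"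
    then obtain a where "a \<in> A" "g \<in> (+) a ` K"
      using supp \<open>v \<noteq> 0\<close> by fastforce
    with g show "g \<in> (\<Union>a\<in>{a \<in> A. \<phi> a = v}. (+) a ` K)"
      using coset_val by force
  qed (use coset_val in force)
  have "measure M (\<phi> -` {v}) = (\<Sum>a\<in>{a \<in> A. \<phi> a = v}. measure M ((+) a ` K))"
    unfolding vimage
  proof (rule measure_finite_Union)
    show "disjoint_family_on (\<lambda>a. (+) a ` K) {a \<in> A. \<phi> a = v}"
      using A(2) by (rule disjoint_family_on_mono[rotated]) blast
    show "emeasure M ((+) a ` K) \<noteq> \<infinity>" for a
      using hm K compact_coset emeasure_compact_finite unfolding compact_open_subgroup_def by blast
  qed (use A(1) hm K open_coset left_haar_measure_open_sets in \<open>auto simp: compact_open_subgroup_def\<close>)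
  also have "\<dots> = (\<Sum>a\<in>{a \<in> A. \<phi> a = v}. measure M K)"
    using hm K by (simp add: measure_coset compact_open_subgroup_def)
  finally show ?thesis .
qed

lemma haar_int_right_invariant:
  fixes \<phi> :: "'g::topological_group_add \<Rightarrow> 'v::ab_group_add"
  assumes vs: "vector_space sc" and hm: "left_haar_measure M" and K: "compact_open_subgroup K"
    and A: "finite A" "disjoint_family_on (\<lambda>a. (+) a ` K) A"
    and inv: "\<And>g k. k \<in> K \<Longrightarrow> \<phi> (g + k) = \<phi> g"
    and supp: "\<And>g. \<phi> g \<noteq> 0 \<Longrightarrow> g \<in> (\<Union>a\<in>A. (+) a ` K)"
  shows "haar_int sc M \<phi> = sc (complex_of_real (measure M K)) (\<Sum>a\<in>A. \<phi> a)"
proof -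
  interpret V: vector_space sc by fact
  let ?c = "complex_of_real (measure M K)"
  let ?A = "\<lambda>v. {a \<in> A. \<phi> a = v}"
  note measure_vimage = measure_vimage_right_invariant[OF hm K A inv supp]
  have nonzero_values: "range \<phi> - {0} \<subseteq> \<phi> ` A"
    using supp inv by fastforce
  have "haar_int sc M \<phi> = (\<Sum>v\<in>range \<phi> - {0}. \<Sum>a\<in>?A v. sc ?c (\<phi> a))"
    unfolding haar_int_def
  proof (rule sum.cong[OF refl])
    fix v assume "v \<in> range \<phi> - {0}"
    then have "sc (complex_of_real (measure M (\<phi> -` {v}))) v = sc (\<Sum>a\<in>?A v. ?c) v"
      by (simp only: measure_vimage of_real_sum Diff_iff singleton_iff not_False_eq_True)
    also have "\<dots> = (\<Sum>a\<in>?A v. sc ?c v)"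
      by (rule V.scale_sum_left)
    also have "\<dots> = (\<Sum>a\<in>?A v. sc ?c (\<phi> a))"
      by (rule sum.cong) auto
    finally show "sc (complex_of_real (measure M (\<phi> -` {v}))) v = (\<Sum>a\<in>?A v. sc ?c (\<phi> a))" .
  qed
  also have "\<dots> = (\<Sum>v\<in>range \<phi> - {0}. \<Sum>a\<in>{a \<in> {a\<in>A. \<phi> a \<noteq> 0}. \<phi> a = v}. sc ?c (\<phi> a))"
    by (intro sum.cong refl arg_cong[where f="\<lambda>B. sum _ B"]) auto
  also have "\<dots> = (\<Sum>a\<in>{a\<in>A. \<phi> a \<noteq> 0}. sc ?c (\<phi> a))"
    using A(1) finite_surj[OF A(1) nonzero_values] nonzero_values by (intro sum.group) auto
  also have "\<dots> = (\<Sum>a\<in>A. sc ?c (\<phi> a))"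
    using A(1) by (intro sum.mono_neutral_left) auto
  finally show ?thesis
    by (simp add: V.scale_sum_right)
qed

lemma Cc_infty_common_coset_cover:
  fixes \<phi> \<psi> :: "'g::{topological_group_add,t2_space} \<Rightarrow> 'b::zero"
  assumes "l_group TYPE('g)" "\<phi> \<in> Cc_infty euclidean" "\<psi> \<in> Cc_infty euclidean"
  obtains K A where "compact_open_subgroup K" "finite A" "disjoint_family_on (\<lambda>a. (+) a ` K) A"
    "\<And>g k. k \<in> K \<Longrightarrow> \<phi> (g + k) = \<phi> g" "\<And>g k. k \<in> K \<Longrightarrow> \<psi> (g + k) = \<psi> g"
    "\<And>g. \<phi> g \<noteq> 0 \<Longrightarrow> g \<in> (\<Union>a\<in>A. (+) a ` K)" "\<And>g. \<psi> g \<noteq> 0 \<Longrightarrow> g \<in> (\<Union>a\<in>A. (+) a ` K)"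
proof -
  obtain K1 where K1: "compact_open_subgroup K1" "\<And>g k. k \<in> K1 \<Longrightarrow> \<phi> (g + k) = \<phi> g"
    using Cc_infty_right_invariant[OF assms(1,2)] by metis
  obtain K2 where K2: "compact_open_subgroup K2" "\<And>g k. k \<in> K2 \<Longrightarrow> \<psi> (g + k) = \<psi> g"
    using Cc_infty_right_invariant[OF assms(1,3)] by metis
  obtain S1 where S1: "compact S1" "\<And>g. g \<notin> S1 \<Longrightarrow> \<phi> g = 0"
    using assms(2) unfolding Cc_infty_iff by auto
  obtain S2 where S2: "compact S2" "\<And>g. g \<notin> S2 \<Longrightarrow> \<psi> g = 0"
    using assms(3) unfolding Cc_infty_iff by auto
  have K: "compact_open_subgroup (K1 \<inter> K2)"
    using compact_open_subgroup_Inter[of "{K1, K2}"] K1(1) K2(1) by auto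
  then have "open (K1 \<inter> K2)" "is_subgroup (K1 \<inter> K2)"
    unfolding compact_open_subgroup_def by blast+
  then obtain A where A: "finite A" "S1 \<union> S2 \<subseteq> (\<Union>a\<in>A. (+) a ` (K1 \<inter> K2))"
      "disjoint_family_on (\<lambda>a. (+) a ` (K1 \<inter> K2)) A"
    by (rule compact_disjoint_coset_cover[OF compact_Un[OF S1(1) S2(1)]])
  show thesis
  proof (rule that[OF K A(1,3)])
    show "\<phi> (g + k) = \<phi> g" "\<psi> (g + k) = \<psi> g" if "k \<in> K1 \<inter> K2" for g k
      using that K1(2) K2(2) by simp_all
    show "g \<in> (\<Union>a\<in>A. (+) a ` (K1 \<inter> K2))" if "\<phi> g \<noteq> 0" for g
      using that S1(2) A(2) by blast
    show "g \<in> (\<Union>a\<in>A. (+) a ` (K1 \<inter> K2))" if "\<psi> g \<noteq> 0" for g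
      using that S2(2) A(2) by blast
  qed
qed

lemma haar_int_add:
  fixes \<phi> \<psi> :: "'g::{topological_group_add,t2_space} \<Rightarrow> 'v::ab_group_add"
  assumes "l_group TYPE('g)" "vector_space sc" "left_haar_measure M"
    and "\<phi> \<in> Cc_infty euclidean" "\<psi> \<in> Cc_infty euclidean"
  shows "haar_int sc M (\<lambda>g. \<phi> g + \<psi> g) = haar_int sc M \<phi> + haar_int sc M \<psi>"
proof -
  interpret V: vector_space sc by fact
  obtain K A where K: "compact_open_subgroup K" and A: "finite A" "disjoint_family_on (\<lambda>a. (+) a ` K) A"
    and inv: "\<And>g k. k \<in> K \<Longrightarrow> \<phi> (g + k) = \<phi> g" "\<And>g k. k \<in> K \<Longrightarrow> \<psi> (g + k) = \<psi> g"
    and supp: "\<And>g. \<phi> g \<noteq> 0 \<Longrightarrow> g \<in> (\<Union>a\<in>A. (+) a ` K)" "\<And>g. \<psi> g \<noteq> 0 \<Longrightarrow> g \<in> (\<Union>a\<in>A. (+) a ` K)"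
    using Cc_infty_common_coset_cover[OF assms(1,4,5)] by blast
  note integral = haar_int_right_invariant[OF assms(2,3) K A]
  have "haar_int sc M (\<lambda>g. \<phi> g + \<psi> g) = sc (complex_of_real (measure M K)) (\<Sum>a\<in>A. \<phi> a + \<psi> a)"
    using inv supp by (intro integral) (simp, metis add.right_neutral)
  also have "\<dots> = haar_int sc M \<phi> + haar_int sc M \<psi>"
    using inv supp by (simp add: integral sum.distrib V.scale_right_distrib)
  finally show ?thesis .
qed

lemma haar_int_scale:
  fixes \<phi> :: "'g::{topological_group_add,t2_space} \<Rightarrow> 'v::ab_group_add"
  assumes "l_group TYPE('g)" "vector_space sc" "left_haar_measure M" "\<phi> \<in> Cc_infty euclidean"
  shows "haar_int sc M (\<lambda>g. sc c (\<phi> g)) = sc c (haar_int sc M \<phi>)"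
proof -
  interpret V: vector_space sc by fact
  obtain K A where K: "compact_open_subgroup K" and A: "finite A" "disjoint_family_on (\<lambda>a. (+) a ` K) A"
    and inv: "\<And>g k. k \<in> K \<Longrightarrow> \<phi> (g + k) = \<phi> g" and "\<And>g k. k \<in> K \<Longrightarrow> \<phi> (g + k) = \<phi> g"
    and supp: "\<And>g. \<phi> g \<noteq> 0 \<Longrightarrow> g \<in> (\<Union>a\<in>A. (+) a ` K)" and "\<And>g. \<phi> g \<noteq> 0 \<Longrightarrow> g \<in> (\<Union>a\<in>A. (+) a ` K)"
    using Cc_infty_common_coset_cover[OF assms(1,4,4)] by blast
  note integral = haar_int_right_invariant[OF assms(2,3) K A]
  have "haar_int sc M (\<lambda>g. sc c (\<phi> g)) = sc (complex_of_real (measure M K)) (\<Sum>a\<in>A. sc c (\<phi> a))"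
    using inv supp by (intro integral) auto
  also have "\<dots> = sc c (haar_int sc M \<phi>)"
    using inv supp by (simp add: integral V.scale_sum_right[symmetric] V.scale_left_commute)
  finally show ?thesis .
qed

section \<open>Homogeneous coordinates\<close>

lemma continuous_map_group_add:
  fixes f g :: "'a \<Rightarrow> 'g::topological_monoid_add"
  shows "continuous_map X euclidean f \<Longrightarrow> continuous_map X euclidean g
    \<Longrightarrow> continuous_map X euclidean (\<lambda>x. f x + g x)"
  by (simp add: continuous_map_atin tendsto_add)

lemma continuous_map_group_minus:
  fixes f :: "'a \<Rightarrow> 'g::topological_group_add"
  shows "continuous_map X euclidean f \<Longrightarrow> continuous_map X euclidean (\<lambda>x. - f x)"
  by (simp add: continuous_map_atin tendsto_minus)

definition homog_coords :: "nat \<Rightarrow> 'g::monoid_add \<Rightarrow> (nat \<Rightarrow> 'g) \<Rightarrow> nat \<Rightarrow> 'g" where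
  "homog_coords n g x = restrict (\<lambda>i. g + pprod x i) {..<Suc n}"

definition inhom_coords :: "nat \<Rightarrow> (nat \<Rightarrow> 'g::group_add) \<Rightarrow> nat \<Rightarrow> 'g" where
  "inhom_coords n y = restrict (\<lambda>i. - y i + y (Suc i)) {..<n}"

lemma homog_coords_in_topspace: "homog_coords n g x \<in> topspace (Gpow (Suc n))"
  by (simp add: homog_coords_def)

lemma inhom_coords_in_topspace: "inhom_coords n y \<in> topspace (Gpow n)"
  by (simp add: inhom_coords_def)

text \<open>The simplifier rewrites \<open>topspace (Gpow n)\<close> to \<open>{..<n} \<rightarrow>\<^sub>E UNIV\<close> first, so the
  simp rules must be stated in that form.\<close>

declare homog_coords_in_topspace [simplified, simp] inhom_coords_in_topspace [simplified, simp]

lemma homog_coords_0 [simp]: "homog_coords n g x 0 = g"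
  by (simp add: homog_coords_def)

lemma translate_homog_coords:
  "restrict (\<lambda>i. a + homog_coords n g x i) {..<Suc n} = homog_coords n (a + g) x"
  by (auto simp: homog_coords_def add.assoc)

lemma pprod_inhom_coords:
  fixes y :: "nat \<Rightarrow> 'g::group_add"
  shows "i \<le> n \<Longrightarrow> pprod (inhom_coords n y) i = - y 0 + y i"
proof (induction i)
  case (Suc i)
  then have "pprod (inhom_coords n y) i = - y 0 + y i"
    by simp
  moreover have "inhom_coords n y i = - y i + y (Suc i)"
    using Suc.prems by (simp add: inhom_coords_def)
  ultimately have "pprod (inhom_coords n y) (Suc i) = (- y 0 + y i) + (- y i + y (Suc i))"
    by simp
  then show ?case
    by (simp add: add.assoc)
qed simp

lemma homog_coords_inhom_coords:
  fixes y :: "nat \<Rightarrow> 'g::topological_group_add"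
  assumes "y \<in> topspace (Gpow (Suc n))"
  shows "homog_coords n (y 0) (inhom_coords n y) = y"
proof
  fix i
  show "homog_coords n (y 0) (inhom_coords n y) i = y i"
    using assms pprod_inhom_coords[of i n y] by (auto simp: homog_coords_def PiE_def extensional_def)
qed

lemma inhom_coords_homog_coords:
  fixes x :: "nat \<Rightarrow> 'g::topological_group_add"
  assumes "x \<in> topspace (Gpow n)"
  shows "inhom_coords n (homog_coords n g x) = x"
proof
  fix i
  show "inhom_coords n (homog_coords n g x) i = x i"
  proof (cases "i < n")
    case True
    have "- (g + pprod x i) + (g + (pprod x i + x i)) = x i"
      by (metis add.assoc minus_add_cancel)
    with True show ?thesis
      by (simp add: inhom_coords_def homog_coords_def)
  next
    case False
    with assms show ?thesis
      by (auto simp: inhom_coords_def PiE_def extensional_def)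
  qed
qed

lemma continuous_map_coordinate: "i < n \<Longrightarrow> continuous_map (Gpow n) euclidean (\<lambda>x. x i)"
  using continuous_map_product_projection[of i "{..<n}" "\<lambda>_. euclidean"] by simp

lemma continuous_map_pprod:
  "i \<le> n \<Longrightarrow> continuous_map (Gpow n) euclidean (\<lambda>x. pprod x i :: 'g::topological_monoid_add)"
proof (induction i)
  case (Suc i)
  then have "continuous_map (Gpow n) euclidean (\<lambda>x. pprod x i + x i :: 'g)"
    by (intro continuous_map_group_add continuous_map_coordinate) simp_all
  then show ?case
    by simp
qed simp

lemma continuous_map_homog_coords:
  "continuous_map (prod_topology euclidean (Gpow n)) (Gpow (Suc n))
     (\<lambda>p. homog_coords n (fst p) (snd p) :: nat \<Rightarrow> 'g::topological_monoid_add)"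
  unfolding continuous_map_componentwise
proof (intro conjI ballI)
  fix i :: nat assume "i \<in> {..<Suc n}"
  then have "continuous_map (prod_topology euclidean (Gpow n)) euclidean (\<lambda>p. fst p + pprod (snd p) i :: 'g)"
    by (intro continuous_map_group_add continuous_map_fst
        continuous_map_compose[OF continuous_map_snd continuous_map_pprod, unfolded o_def]) auto
  with \<open>i \<in> {..<Suc n}\<close>
  show "continuous_map (prod_topology euclidean (Gpow n)) euclidean (\<lambda>p. homog_coords n (fst p) (snd p) i :: 'g)"
    by (simp add: homog_coords_def)
qed (auto simp: homog_coords_def)

lemma continuous_map_inhom_coords:
  "continuous_map (Gpow (Suc n)) (Gpow n) (inhom_coords n :: (nat \<Rightarrow> 'g::topological_group_add) \<Rightarrow> _)"
  unfolding continuous_map_componentwise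
proof (intro conjI ballI)
  fix i :: nat assume "i \<in> {..<n}"
  then have "continuous_map (Gpow (Suc n)) euclidean (\<lambda>y. - y i + y (Suc i) :: 'g)"
    by (intro continuous_map_group_add continuous_map_group_minus continuous_map_coordinate) simp_all
  with \<open>i \<in> {..<n}\<close> show "continuous_map (Gpow (Suc n)) euclidean (\<lambda>y. inhom_coords n y i :: 'g)"
    by (simp add: inhom_coords_def)
qed (auto simp: inhom_coords_def)

lemma continuous_map_translate:
  "continuous_map (Gpow m) (Gpow m) (\<lambda>x. restrict (\<lambda>i. a + x i) {..<m} :: nat \<Rightarrow> 'g::topological_monoid_add)"
  unfolding continuous_map_componentwise
proof (intro conjI ballI)
  fix i :: nat assume "i \<in> {..<m}"
  then have "continuous_map (Gpow m) euclidean (\<lambda>x. a + x i :: 'g)"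
    by (intro continuous_map_group_add continuous_map_coordinate) simp_all
  with \<open>i \<in> {..<m}\<close> show "continuous_map (Gpow m) euclidean (\<lambda>x. restrict (\<lambda>i. a + x i) {..<m} i :: 'g)"
    by simp
qed auto

lemma translate_translate:
  fixes x :: "nat \<Rightarrow> 'g::topological_group_add"
  assumes "x \<in> topspace (Gpow m)"
  shows "restrict (\<lambda>i. a + restrict (\<lambda>i. - a + x i) {..<m} i) {..<m} = x"
  using assms by (auto simp: PiE_def extensional_def)

section \<open>Smooth representations\<close>

lemma fun_module:
  assumes "vector_space sc"
  shows "module (\<lambda>c (f :: 'a \<Rightarrow> 'v::ab_group_add) x. sc c (f x))"
proof -
  interpret V: vector_space sc by fact
  show ?thesis
    by unfold_locales (simp_all add: fun_eq_iff V.scale_right_distrib V.scale_left_distrib)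
qed

locale smooth_representation =
  fixes sc :: "complex \<Rightarrow> 'v::ab_group_add \<Rightarrow> 'v"
    and act :: "'g::topological_group_add \<Rightarrow> 'v \<Rightarrow> 'v"
  assumes smooth: "smooth_module sc act"
begin

sublocale V: vector_space sc
  using smooth by (simp add: smooth_module_def)

lemma act_module_hom: "module_hom sc sc (act g)"
  using smooth by (simp add: smooth_module_def linear_iff_module_hom)

lemmas act_add = module_hom.add[OF act_module_hom]
  and act_scale = module_hom.scale[OF act_module_hom]
  and act_zero [simp] = module_hom.zero[OF act_module_hom]
  and act_sum = module_hom.sum[OF act_module_hom]

lemma act_0 [simp]: "act 0 v = v"
  using smooth by (simp add: smooth_module_def)

lemma act_plus: "act (g + h) v = act g (act h v)"
  using smooth by (simp add: smooth_module_def)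

lemma act_minus_act [simp]: "act (- g) (act g v) = v"
  using act_plus[of "- g" g v] by simp

lemma act_act_minus [simp]: "act g (act (- g) v) = v"
  using act_plus[of g "- g" v] by simp

lemma ex_fixing_subgroup: "\<exists>K. compact_open_subgroup K \<and> (\<forall>k\<in>K. act k v = v)"
proof -
  have "\<forall>v. \<exists>K. compact K \<and> open K \<and> is_subgroup K \<and> (\<forall>k\<in>K. act k v = v)"
    using smooth unfolding smooth_module_def by (elim conjE) assumption
  then show ?thesis
    unfolding compact_open_subgroup_def by blast
qed

lemma locally_constant_act:
  assumes "locally_constant X w" "continuous_map X euclidean h"
  shows "locally_constant X (\<lambda>x. act (h x) (w x))"
  unfolding locally_constant_def
proof
  fix y assume y: "y \<in> topspace X"
  obtain U where U: "openin X U" "y \<in> U" "\<forall>z\<in>U. w z = w y"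
    using assms(1) y unfolding locally_constant_def by blast
  obtain K where K: "compact_open_subgroup K" "\<forall>k\<in>K. act k (w y) = w y"
    using ex_fixing_subgroup by blast
  have "open K" "is_subgroup K"
    using K(1) unfolding compact_open_subgroup_def by blast+
  let ?V = "{x \<in> topspace X. h x \<in> (+) (h y) ` K}"
  have "openin X ?V"
    using openin_continuous_map_preimage[OF assms(2), of "(+) (h y) ` K"] open_coset[OF \<open>open K\<close>]
    by simp
  moreover have "y \<in> ?V"
    using y is_subgroupD(1)[OF \<open>is_subgroup K\<close>] by (simp add: mem_coset_iff)
  moreover have "act (h z) (w z) = act (h y) (w y)" if z: "z \<in> U \<inter> ?V" for z
  proof -
    obtain k where "k \<in> K" "h z = h y + k"
      using z by blast
    moreover have "w z = w y"
      using z U(3) by blast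
    ultimately show ?thesis
      using K(2) by (simp add: act_plus)
  qed
  ultimately show "\<exists>V. openin X V \<and> y \<in> V \<and> (\<forall>z\<in>V. act (h z) (w z) = act (h y) (w y))"
    using U(1,2) by (intro exI[of _ "U \<inter> ?V"]) blast
qed

lemma G_act_fun_in_Cc_infty:
  assumes "f \<in> Cc_infty (Gpow m)"
  shows "G_act_fun act m h f \<in> Cc_infty (Gpow m)"
proof -
  let ?t = "\<lambda>a x. restrict (\<lambda>i. a + x i) {..<m} :: nat \<Rightarrow> 'g"
  obtain C where C: "compactin (Gpow m) C" "\<forall>y\<in>topspace (Gpow m) - C. f y = 0"
    and lc: "locally_constant (Gpow m) f"
    using assms unfolding Cc_infty_iff by blast
  have "locally_constant (Gpow m) (\<lambda>x. f (?t (- h) x))"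
    using lc continuous_map_translate by (rule locally_constant_compose)
  then have "locally_constant (Gpow m) (\<lambda>x. act h (f (?t (- h) x)))"
    using locally_constant_binop[of "Gpow m" _ _ "\<lambda>u _. act h u"] by blast
  then have "locally_constant (Gpow m) (G_act_fun act m h f)"
    by (rule locally_constant_cong) (simp add: G_act_fun_def)
  moreover have "compactin (Gpow m) (?t h ` C)"
    using C(1) continuous_map_translate by (rule image_compactin)
  moreover have "G_act_fun act m h f y = 0" if "y \<in> topspace (Gpow m) - ?t h ` C" for y
  proof -
    have "y = ?t h (?t (- h) y)"
      using that translate_translate[of y m h] by simp
    with that have "?t (- h) y \<notin> C"
      by blast
    with that C(2) show ?thesis
      by (simp add: G_act_fun_def)
  qed
  ultimately show ?thesis
    unfolding Cc_infty_iff by (auto simp: G_act_fun_def)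
qed

lemma G_act_fun_plus: "G_act_fun act m g (G_act_fun act m h f) = G_act_fun act m (g + h) f"
proof
  fix x
  show "G_act_fun act m g (G_act_fun act m h f) x = G_act_fun act m (g + h) f x"
  proof (cases "x \<in> topspace (Gpow m)")
    case True
    have "restrict (\<lambda>i. - h + restrict (\<lambda>i. - g + x i) {..<m} i) {..<m}
        = restrict (\<lambda>i. - (g + h) + x i) {..<m}"
      by (rule restrict_ext) (simp only: restrict_apply' minus_add add.assoc)
    moreover have "restrict (\<lambda>i. - g + x i) {..<m} \<in> topspace (Gpow m)"
      by simp
    ultimately show ?thesis
      using True by (simp only: G_act_fun_def if_True act_plus)
  qed (simp add: G_act_fun_def)
qed

lemma G_act_fun_0:
  assumes "f \<in> Cc_infty (Gpow m)"
  shows "G_act_fun act m 0 f = f"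
proof
  fix x
  show "G_act_fun act m 0 f x = f x"
  proof (cases "x \<in> topspace (Gpow m)")
    case True
    then have "restrict (\<lambda>i. - 0 + x i) {..<m} = x"
      by (auto simp: PiE_def extensional_def)
    with True show ?thesis
      by (simp add: G_act_fun_def)
  qed (use assms in \<open>simp add: G_act_fun_def Cc_infty_iff\<close>)
qed

end

section \<open>The operator \<open>T\<^sub>n\<close>\<close>

definition T_integrand :: "('g::group_add \<Rightarrow> 'v \<Rightarrow> 'v) \<Rightarrow> nat \<Rightarrow> ((nat \<Rightarrow> 'g) \<Rightarrow> 'v) \<Rightarrow> 'g \<Rightarrow> (nat \<Rightarrow> 'g) \<Rightarrow> 'v" where
  "T_integrand act n f g x = act (- g) (f (homog_coords n g x))"

definition T_preimage :: "(complex \<Rightarrow> 'v \<Rightarrow> 'v) \<Rightarrow> ('g::topological_group_add \<Rightarrow> 'v \<Rightarrow> 'v::zero) \<Rightarrow> nat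
    \<Rightarrow> 'g set \<Rightarrow> complex \<Rightarrow> ((nat \<Rightarrow> 'g) \<Rightarrow> 'v) \<Rightarrow> (nat \<Rightarrow> 'g) \<Rightarrow> 'v" where
  "T_preimage sc act n K c \<phi> y = (if y \<in> topspace (Gpow (Suc n)) \<and> y 0 \<in> K
     then act (y 0) (sc c (\<phi> (inhom_coords n y))) else 0)"

lemma T_op_eq_haar_int:
  "x \<in> topspace (Gpow n) \<Longrightarrow> T_op sc M act n f x = haar_int sc M (\<lambda>g. T_integrand act n f g x)"
  by (simp add: T_op_def T_integrand_def homog_coords_def)

lemma T_op_outside: "x \<notin> topspace (Gpow n) \<Longrightarrow> T_op sc M act n f x = 0"
  by (simp add: T_op_def)

context smooth_representation
begin

lemma T_integrand_locally_constant:
  assumes "locally_constant (Gpow (Suc n)) f"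
  shows "locally_constant (prod_topology euclidean (Gpow n)) (\<lambda>p. T_integrand act n f (fst p) (snd p))"
  unfolding T_integrand_def
  by (intro locally_constant_act locally_constant_compose[OF assms continuous_map_homog_coords]
      continuous_map_group_minus continuous_map_fst)

lemma T_integrand_support:
  assumes "f \<in> Cc_infty (Gpow (Suc n))"
  obtains C where "compactin (prod_topology euclidean (Gpow n)) C"
    "\<And>g x. x \<in> topspace (Gpow n) \<Longrightarrow> (g, x) \<notin> C \<Longrightarrow> T_integrand act n f g x = 0"
    "\<And>y. f y \<noteq> 0 \<Longrightarrow> (y 0, inhom_coords n y) \<in> C"
proof -
  obtain Cf where Cf: "compactin (Gpow (Suc n)) Cf" "\<forall>y\<in>topspace (Gpow (Suc n)) - Cf. f y = 0"
    and out: "\<forall>y. y \<notin> topspace (Gpow (Suc n)) \<longrightarrow> f y = 0"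
    using assms unfolding Cc_infty_iff by blast
  define F where "F y = (y 0, inhom_coords n y)" for y :: "nat \<Rightarrow> 'g"
  show thesis
  proof (rule that)
    show "compactin (prod_topology euclidean (Gpow n)) (F ` Cf)"
      using Cf(1) unfolding F_def
      by (rule image_compactin)
        (intro continuous_map_pairedI continuous_map_coordinate[OF zero_less_Suc] continuous_map_inhom_coords)
    show "T_integrand act n f g x = 0" if "x \<in> topspace (Gpow n)" "(g, x) \<notin> F ` Cf" for g x
    proof -
      have "(g, x) = F (homog_coords n g x)"
        using inhom_coords_homog_coords[OF that(1)] by (simp add: F_def)
      with that(2) have "homog_coords n g x \<notin> Cf"
        by blast
      then have "f (homog_coords n g x) = 0"
        using Cf(2) homog_coords_in_topspace by blast
      then show ?thesis
        by (simp add: T_integrand_def)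
    qed
    show "(y 0, inhom_coords n y) \<in> F ` Cf" if "f y \<noteq> 0" for y
      using that Cf(2) out unfolding F_def by blast
  qed
qed

lemma T_integrand_in_Cc_infty:
  assumes "f \<in> Cc_infty (Gpow (Suc n))" "x \<in> topspace (Gpow n)"
  shows "(\<lambda>g. T_integrand act n f g x) \<in> Cc_infty euclidean"
proof -
  obtain C where C: "compactin (prod_topology euclidean (Gpow n)) C"
    "\<And>g x. x \<in> topspace (Gpow n) \<Longrightarrow> (g, x) \<notin> C \<Longrightarrow> T_integrand act n f g x = 0"
    "\<And>y. f y \<noteq> 0 \<Longrightarrow> (y 0, inhom_coords n y) \<in> C"
    using T_integrand_support[OF assms(1)] by blast
  have "continuous_map euclidean (prod_topology euclidean (Gpow n)) (\<lambda>g. (g, x))"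
    using assms(2) by (intro continuous_map_pairedI) (auto simp: continuous_map_def)
  moreover have "locally_constant (Gpow (Suc n)) f"
    using assms(1) unfolding Cc_infty_iff by blast
  ultimately have "locally_constant euclidean (\<lambda>g. T_integrand act n f g x)"
    using locally_constant_compose[OF T_integrand_locally_constant] by fastforce
  moreover have "compact (fst ` C)"
    using image_compactin[OF C(1) continuous_map_fst] by simp
  moreover have "T_integrand act n f g x = 0" if "g \<notin> fst ` C" for g
    using that C(2)[OF assms(2)] by force
  ultimately show ?thesis
    unfolding Cc_infty_iff by (intro conjI exI[of _ "fst ` C"]) auto
qed

lemma T_integrand_add:
  "T_integrand act n (\<lambda>y. f1 y + f2 y) g x = T_integrand act n f1 g x + T_integrand act n f2 g x"
  by (simp add: T_integrand_def act_add)

lemma T_integrand_scale: "T_integrand act n (\<lambda>y. sc c (f y)) g x = sc c (T_integrand act n f g x)"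
  by (simp add: T_integrand_def act_scale)

lemma T_integrand_G_act_fun:
  "T_integrand act n (G_act_fun act (Suc n) h f) g x = T_integrand act n f (- h + g) x"
proof -
  have "G_act_fun act (Suc n) h f (homog_coords n g x) = act h (f (homog_coords n (- h + g) x))"
    by (simp add: G_act_fun_def translate_homog_coords)
  moreover have "- g + h = - (- h + g)"
    by (simp add: minus_add)
  ultimately show ?thesis
    by (simp add: T_integrand_def flip: act_plus)
qed

lemma T_preimage_in_Cc_infty:
  assumes K: "compact_open_subgroup K" and \<phi>: "\<phi> \<in> Cc_infty (Gpow n)"
  shows "T_preimage sc act n K c \<phi> \<in> Cc_infty (Gpow (Suc n))"
proof -
  have "open K" "is_subgroup K" "compact K"
    using K unfolding compact_open_subgroup_def by blast+
  obtain C\<phi> where C\<phi>: "compactin (Gpow n) C\<phi>" "\<forall>x\<in>topspace (Gpow n) - C\<phi>. \<phi> x = 0"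
    and lc\<phi>: "locally_constant (Gpow n) \<phi>" and "\<forall>x. x \<notin> topspace (Gpow n) \<longrightarrow> \<phi> x = 0"
    using \<phi> unfolding Cc_infty_iff by blast
  define f where "f = T_preimage sc act n K c \<phi>"
  define Cf where "Cf = (\<lambda>p. homog_coords n (fst p) (snd p)) ` (K \<times> C\<phi>)"
  have "locally_constant (Gpow (Suc n)) (\<lambda>y. y 0 \<in> (+) 0 ` K)"
    using \<open>open K\<close> \<open>is_subgroup K\<close> continuous_map_coordinate[OF zero_less_Suc]
    by (rule locally_constant_mem_coset)
  moreover have "locally_constant (Gpow (Suc n)) (\<lambda>y. sc c (\<phi> (inhom_coords n y)))"
    using locally_constant_compose[OF lc\<phi> continuous_map_inhom_coords]
      locally_constant_binop[where H = "\<lambda>u _. sc c u"] by blast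
  then have "locally_constant (Gpow (Suc n)) (\<lambda>y. act (y 0) (sc c (\<phi> (inhom_coords n y))))"
    by (rule locally_constant_act[OF _ continuous_map_coordinate[OF zero_less_Suc]])
  ultimately have "locally_constant (Gpow (Suc n))
      (\<lambda>y. if y 0 \<in> (+) 0 ` K then act (y 0) (sc c (\<phi> (inhom_coords n y))) else 0)"
    by (rule locally_constant_binop)
  then have "locally_constant (Gpow (Suc n)) f"
    by (rule locally_constant_cong) (simp add: f_def T_preimage_def)
  moreover have "compactin (Gpow (Suc n)) Cf"
    unfolding Cf_def using \<open>compact K\<close> C\<phi>(1) continuous_map_homog_coords
    by (intro image_compactin) (auto simp: compactin_Times)
  moreover have "f y = 0" if "y \<in> topspace (Gpow (Suc n)) - Cf" for y
  proof (rule ccontr)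
    assume "f y \<noteq> 0"
    with that have "y 0 \<in> K" "\<phi> (inhom_coords n y) \<noteq> 0"
      by (auto simp: f_def T_preimage_def split: if_splits)
    moreover have "inhom_coords n y \<in> C\<phi>"
      using calculation(2) C\<phi>(2) inhom_coords_in_topspace by blast
    ultimately have "homog_coords n (y 0) (inhom_coords n y) \<in> Cf"
      unfolding Cf_def by force
    moreover have "homog_coords n (y 0) (inhom_coords n y) = y"
      using that homog_coords_inhom_coords by blast
    ultimately show False
      using that by simp
  qed
  moreover have "\<forall>y. y \<notin> topspace (Gpow (Suc n)) \<longrightarrow> f y = 0"
    by (simp add: f_def T_preimage_def)
  ultimately show ?thesis
    unfolding Cc_infty_iff f_def by blast
qed

lemma T_integrand_T_preimage:
  assumes "x \<in> topspace (Gpow n)"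
  shows "T_integrand act n (T_preimage sc act n K c \<phi>) g x = (if g \<in> K then sc c (\<phi> x) else 0)"
  using assms by (auto simp: T_integrand_def T_preimage_def inhom_coords_homog_coords)

end

locale l_group_representation = smooth_representation sc act
  for sc :: "complex \<Rightarrow> 'v::ab_group_add \<Rightarrow> 'v"
    and act :: "'g::{topological_group_add,t2_space} \<Rightarrow> 'v \<Rightarrow> 'v" +
  fixes M :: "'g measure"
  assumes l_group: "l_group TYPE('g)" and haar: "left_haar_measure M"
begin

lemma T_integrand_right_invariant:
  assumes "f \<in> Cc_infty (Gpow (Suc n))"
  obtains K where "compact_open_subgroup K"
    "\<And>g x k. x \<in> topspace (Gpow n) \<Longrightarrow> k \<in> K \<Longrightarrow> T_integrand act n f (g + k) x = T_integrand act n f g x"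
proof -
  obtain C where C: "compactin (prod_topology euclidean (Gpow n)) C"
    "\<And>g x. x \<in> topspace (Gpow n) \<Longrightarrow> (g, x) \<notin> C \<Longrightarrow> T_integrand act n f g x = 0"
    "\<And>y. f y \<noteq> 0 \<Longrightarrow> (y 0, inhom_coords n y) \<in> C"
    using T_integrand_support[OF assms] by blast
  let ?\<Phi> = "\<lambda>p. T_integrand act n f (fst p) (snd p)"
  have lc: "locally_constant (prod_topology euclidean (Gpow n)) ?\<Phi>"
    using assms unfolding Cc_infty_iff by (blast intro: T_integrand_locally_constant)
  have zero: "?\<Phi> (g, x) = 0" if "x \<in> topspace (Gpow n)" "(g, x) \<notin> C" for g x
    using C(2)[OF that] by simp
  obtain K where K: "compact_open_subgroup K"
    and inv: "\<And>g x k. x \<in> topspace (Gpow n) \<Longrightarrow> k \<in> K \<Longrightarrow> ?\<Phi> (g + k, x) = ?\<Phi> (g, x)"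
    using uniformly_locally_constant[OF l_group lc C(1) zero] by blast
  show thesis
  proof (rule that[OF K])
    show "T_integrand act n f (g + k) x = T_integrand act n f g x"
      if "x \<in> topspace (Gpow n)" "k \<in> K" for g x k
      using inv[OF that] by simp
  qed
qed

lemma T_op_coset_sum:
  assumes "f \<in> Cc_infty (Gpow (Suc n))"
  obtains K A where "compact_open_subgroup K" "finite A" "disjoint_family_on (\<lambda>a. (+) a ` K) A"
    "\<And>g x k. x \<in> topspace (Gpow n) \<Longrightarrow> k \<in> K \<Longrightarrow> T_integrand act n f (g + k) x = T_integrand act n f g x"
    "\<And>y. f y \<noteq> 0 \<Longrightarrow> y 0 \<in> (\<Union>a\<in>A. (+) a ` K)"
    "\<And>x. x \<in> topspace (Gpow n)
      \<Longrightarrow> T_op sc M act n f x = sc (complex_of_real (measure M K)) (\<Sum>a\<in>A. T_integrand act n f a x)"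
proof -
  obtain C where C: "compactin (prod_topology euclidean (Gpow n)) C"
    "\<And>g x. x \<in> topspace (Gpow n) \<Longrightarrow> (g, x) \<notin> C \<Longrightarrow> T_integrand act n f g x = 0"
    "\<And>y. f y \<noteq> 0 \<Longrightarrow> (y 0, inhom_coords n y) \<in> C"
    using T_integrand_support[OF assms] by blast
  obtain K where K: "compact_open_subgroup K"
    and inv: "\<And>g x k. x \<in> topspace (Gpow n) \<Longrightarrow> k \<in> K \<Longrightarrow> T_integrand act n f (g + k) x = T_integrand act n f g x"
    using T_integrand_right_invariant[OF assms] by blast
  have "compact (fst ` C)"
    using image_compactin[OF C(1) continuous_map_fst] by simp
  moreover have "open K" "is_subgroup K"
    using K unfolding compact_open_subgroup_def by blast+
  ultimately obtain A where A: "finite A" "fst ` C \<subseteq> (\<Union>a\<in>A. (+) a ` K)"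
    "disjoint_family_on (\<lambda>a. (+) a ` K) A"
    by (rule compact_disjoint_coset_cover)
  have supp: "g \<in> (\<Union>a\<in>A. (+) a ` K)" if "x \<in> topspace (Gpow n)" "T_integrand act n f g x \<noteq> 0" for g x
  proof -
    have "(g, x) \<in> C"
      using that C(2) by blast
    with A(2) show ?thesis
      by (metis fst_conv image_eqI subsetD)
  qed
  show thesis
  proof (rule that[OF K A(1,3) inv])
    show "y 0 \<in> (\<Union>a\<in>A. (+) a ` K)" if "f y \<noteq> 0" for y
      using C(3)[OF that] A(2) by (metis fst_conv image_eqI subsetD)
    show "T_op sc M act n f x = sc (complex_of_real (measure M K)) (\<Sum>a\<in>A. T_integrand act n f a x)"
      if x: "x \<in> topspace (Gpow n)" for x
      unfolding T_op_eq_haar_int[OF x]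
      by (rule haar_int_right_invariant[OF V.vector_space_axioms haar K A(1,3)])
        (use inv[OF x] supp[OF x] in simp_all)
  qed
qed

lemma T_op_in_Cc_infty:
  assumes "f \<in> Cc_infty (Gpow (Suc n))"
  shows "T_op sc M act n f \<in> Cc_infty (Gpow n)"
proof -
  obtain K A where "compact_open_subgroup K" and A: "finite A" and "disjoint_family_on (\<lambda>a. (+) a ` K) A"
    "\<And>g x k. x \<in> topspace (Gpow n) \<Longrightarrow> k \<in> K \<Longrightarrow> T_integrand act n f (g + k) x = T_integrand act n f g x"
    "\<And>y. f y \<noteq> 0 \<Longrightarrow> y 0 \<in> (\<Union>a\<in>A. (+) a ` K)"
    and sum: "\<And>x. x \<in> topspace (Gpow n)
      \<Longrightarrow> T_op sc M act n f x = sc (complex_of_real (measure M K)) (\<Sum>a\<in>A. T_integrand act n f a x)"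
    using T_op_coset_sum[OF assms] by blast
  obtain C where C: "compactin (prod_topology euclidean (Gpow n)) C"
    "\<And>g x. x \<in> topspace (Gpow n) \<Longrightarrow> (g, x) \<notin> C \<Longrightarrow> T_integrand act n f g x = 0"
    "\<And>y. f y \<noteq> 0 \<Longrightarrow> (y 0, inhom_coords n y) \<in> C"
    using T_integrand_support[OF assms] by blast
  have lc: "locally_constant (prod_topology euclidean (Gpow n)) (\<lambda>p. T_integrand act n f (fst p) (snd p))"
    using assms unfolding Cc_infty_iff by (blast intro: T_integrand_locally_constant)
  have "locally_constant (Gpow n) (\<lambda>x. T_integrand act n f a x)" for a
  proof -
    have "continuous_map (Gpow n) (prod_topology euclidean (Gpow n)) (\<lambda>x. (a, x))"
      by (intro continuous_map_pairedI) auto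
    from locally_constant_compose[OF lc this] show ?thesis
      by simp
  qed
  then have "locally_constant (Gpow n) (\<lambda>x. \<Sum>a\<in>A. T_integrand act n f a x)"
    by (rule locally_constant_sum[OF A])
  then have "locally_constant (Gpow n) (\<lambda>x. sc (complex_of_real (measure M K)) (\<Sum>a\<in>A. T_integrand act n f a x))"
    using locally_constant_binop[where H = "\<lambda>u _. sc _ u"] by blast
  then have "locally_constant (Gpow n) (T_op sc M act n f)"
    using sum by (rule locally_constant_cong)
  moreover have "compactin (Gpow n) (snd ` C)"
    using C(1) continuous_map_snd by (rule image_compactin)
  moreover have "T_op sc M act n f x = 0" if "x \<in> topspace (Gpow n) - snd ` C" for x
  proof -
    have "(g, x) \<notin> C" for g
      using that by (metis DiffD2 image_eqI snd_conv)
    then have "T_integrand act n f g x = 0" for g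
      using that C(2) by blast
    with that show ?thesis
      by (simp add: T_op_eq_haar_int haar_int_eq_0)
  qed
  ultimately show ?thesis
    unfolding Cc_infty_iff by (blast intro: T_op_outside)
qed

lemma T_op_add:
  assumes "f1 \<in> Cc_infty (Gpow (Suc n))" "f2 \<in> Cc_infty (Gpow (Suc n))"
  shows "T_op sc M act n (\<lambda>y. f1 y + f2 y) = (\<lambda>x. T_op sc M act n f1 x + T_op sc M act n f2 x)"
proof
  fix x
  show "T_op sc M act n (\<lambda>y. f1 y + f2 y) x = T_op sc M act n f1 x + T_op sc M act n f2 x"
  proof (cases "x \<in> topspace (Gpow n)")
    case True
    then show ?thesis
      unfolding T_op_eq_haar_int[OF True] T_integrand_add
      by (intro haar_int_add l_group V.vector_space_axioms haar T_integrand_in_Cc_infty assms)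
  qed (simp add: T_op_outside)
qed

lemma T_op_scale:
  assumes "f \<in> Cc_infty (Gpow (Suc n))"
  shows "T_op sc M act n (\<lambda>y. sc c (f y)) = (\<lambda>x. sc c (T_op sc M act n f x))"
proof
  fix x
  show "T_op sc M act n (\<lambda>y. sc c (f y)) x = sc c (T_op sc M act n f x)"
  proof (cases "x \<in> topspace (Gpow n)")
    case True
    then show ?thesis
      unfolding T_op_eq_haar_int[OF True] T_integrand_scale
      by (intro haar_int_scale l_group V.vector_space_axioms haar T_integrand_in_Cc_infty assms)
  qed (simp add: T_op_outside)
qed

lemma T_op_G_act_fun:
  assumes "f \<in> Cc_infty (Gpow (Suc n))"
  shows "T_op sc M act n (G_act_fun act (Suc n) h f) = T_op sc M act n f"
proof
  fix x
  show "T_op sc M act n (G_act_fun act (Suc n) h f) x = T_op sc M act n f x"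
  proof (cases "x \<in> topspace (Gpow n)")
    case True
    have "locally_constant euclidean (\<lambda>g. T_integrand act n f g x)"
      using T_integrand_in_Cc_infty[OF assms True] unfolding Cc_infty_iff by blast
    then show ?thesis
      unfolding T_op_eq_haar_int[OF True] T_integrand_G_act_fun
      by (rule haar_int_translate[OF haar])
  qed (simp add: T_op_outside)
qed

lemma T_op_zero: "T_op sc M act n (\<lambda>_. 0) = (\<lambda>_. 0)"
  by (rule ext) (simp add: T_op_def haar_int_eq_0)

lemma T_op_T_preimage:
  assumes K: "compact_open_subgroup K" and \<phi>: "\<phi> \<in> Cc_infty (Gpow n)"
  shows "T_op sc M act n (T_preimage sc act n K (inverse (complex_of_real (measure M K))) \<phi>) = \<phi>"
proof
  fix x
  define c where "c = complex_of_real (measure M K)"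
  show "T_op sc M act n (T_preimage sc act n K (inverse c) \<phi>) x = \<phi> x"
  proof (cases "x \<in> topspace (Gpow n)")
    case True
    have "is_subgroup K"
      using K unfolding compact_open_subgroup_def by blast
    have "c \<noteq> 0"
      using measure_compact_open_subgroup_pos[OF haar K] by (simp add: c_def)
    have "T_op sc M act n (T_preimage sc act n K (inverse c) \<phi>) x
        = haar_int sc M (\<lambda>g. if g \<in> K then sc (inverse c) (\<phi> x) else 0)"
      by (simp add: T_op_eq_haar_int[OF True] T_integrand_T_preimage[OF True])
    also have "\<dots> = sc c (\<Sum>a\<in>{0}. if a \<in> K then sc (inverse c) (\<phi> x) else 0)"
      unfolding c_def using \<open>is_subgroup K\<close>
      by (intro haar_int_right_invariant[OF V.vector_space_axioms haar K])
        (auto simp: disjoint_family_on_def subgroup_add_right_iff split: if_splits)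
    also have "\<dots> = \<phi> x"
      using \<open>c \<noteq> 0\<close> is_subgroupD(1)[OF \<open>is_subgroup K\<close>] by simp
    finally show ?thesis .
  qed (use \<phi> in \<open>simp add: T_op_outside Cc_infty_iff\<close>)
qed

lemma Cc_infty_subset_T_op_image: "Cc_infty (Gpow n) \<subseteq> T_op sc M act n ` Cc_infty (Gpow (Suc n))"
proof
  fix \<phi> :: "(nat \<Rightarrow> 'g) \<Rightarrow> 'v" assume \<phi>: "\<phi> \<in> Cc_infty (Gpow n)"
  obtain K :: "'g set" where K: "compact_open_subgroup K"
    using ex_compact_open_subgroup[OF l_group open_UNIV UNIV_I] by blast
  show "\<phi> \<in> T_op sc M act n ` Cc_infty (Gpow (Suc n))"
    by (rule image_eqI[where f = "T_op sc M act n", OF T_op_T_preimage[OF K \<phi>, symmetric]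
          T_preimage_in_Cc_infty[OF K \<phi>]])
qed

text \<open>At a point \<open>y\<close> with \<open>y\<^sub>0 \<in> K\<close> the sum is \<open>y\<^sub>0\<close> applied to
  \<open>\<Sum>\<^sub>a T_integrand act n f a x\<close>, where \<open>x = inhom_coords n y\<close>.\<close>

lemma sum_translated_coset_parts:
  assumes Tf: "T_op sc M act n f = (\<lambda>_. 0)" and K: "compact_open_subgroup K"
    and inv: "\<And>g x k. x \<in> topspace (Gpow n) \<Longrightarrow> k \<in> K \<Longrightarrow> T_integrand act n f (g + k) x = T_integrand act n f g x"
    and sum: "\<And>x. x \<in> topspace (Gpow n)
      \<Longrightarrow> T_op sc M act n f x = sc (complex_of_real (measure M K)) (\<Sum>a\<in>A. T_integrand act n f a x)"
  shows "(\<Sum>a\<in>A. G_act_fun act (Suc n) (- a) (\<lambda>y. if y 0 \<in> (+) a ` K then f y else 0)) = 0"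
proof
  fix y
  let ?part = "\<lambda>a y. if y 0 \<in> (+) a ` K then f y else 0"
  have "(\<Sum>a\<in>A. G_act_fun act (Suc n) (- a) (?part a) y) = 0"
  proof (cases "y \<in> topspace (Gpow (Suc n)) \<and> y 0 \<in> K")
    case True
    define g0 x where "g0 = y 0" and "x = inhom_coords n y"
    have x: "x \<in> topspace (Gpow n)"
      by (simp add: x_def)
    have y: "y = homog_coords n g0 x"
      using True homog_coords_inhom_coords[of y n] unfolding g0_def x_def by argo
    have "G_act_fun act (Suc n) (- a) (?part a) y = act g0 (T_integrand act n f a x)" for a
    proof -
      have "T_integrand act n f a x = T_integrand act n f (a + g0) x"
        using inv[OF x] True by (simp add: g0_def)
      also have "\<dots> = act (- g0) (act (- a) (f (homog_coords n (a + g0) x)))"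
        by (simp only: T_integrand_def minus_add act_plus)
      finally show ?thesis
        unfolding y using True
        by (simp add: G_act_fun_def translate_homog_coords mem_coset_iff g0_def)
    qed
    moreover have "(\<Sum>a\<in>A. T_integrand act n f a x) = 0"
      using sum[OF x] Tf measure_compact_open_subgroup_pos[OF haar K] by simp
    ultimately show ?thesis
      by (simp flip: act_sum)
  next
    case False
    have "G_act_fun act (Suc n) (- a) (?part a) y = 0" for a
    proof (cases "y \<in> topspace (Gpow (Suc n))")
      case True
      with False have "y 0 \<notin> K"
        by blast
      with True show ?thesis
        by (simp add: G_act_fun_def mem_coset_iff)
    qed (simp add: G_act_fun_def)
    then show ?thesis
      by simp
  qed
  then show "(\<Sum>a\<in>A. G_act_fun act (Suc n) (- a) (?part a)) y = 0 y"
    by (simp add: sum_fun_apply)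
qed

lemma T_op_kernel_subset_span:
  assumes f: "f \<in> Cc_infty (Gpow (Suc n))" and Tf: "T_op sc M act n f = (\<lambda>_. 0)"
  shows "f \<in> fun_cspan sc {G_act_fun act (Suc n) g f - f | g f. f \<in> Cc_infty (Gpow (Suc n))}"
proof -
  interpret F: module "\<lambda>c (f :: (nat \<Rightarrow> 'g) \<Rightarrow> 'v) x. sc c (f x)"
    by (rule fun_module[OF V.vector_space_axioms])
  obtain K A where K: "compact_open_subgroup K" and A: "finite A" "disjoint_family_on (\<lambda>a. (+) a ` K) A"
    and inv: "\<And>g x k. x \<in> topspace (Gpow n) \<Longrightarrow> k \<in> K \<Longrightarrow> T_integrand act n f (g + k) x = T_integrand act n f g x"
    and supp: "\<And>y. f y \<noteq> 0 \<Longrightarrow> y 0 \<in> (\<Union>a\<in>A. (+) a ` K)"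
    and sum: "\<And>x. x \<in> topspace (Gpow n)
      \<Longrightarrow> T_op sc M act n f x = sc (complex_of_real (measure M K)) (\<Sum>a\<in>A. T_integrand act n f a x)"
    using T_op_coset_sum[OF f] by blast
  then have "open K" "is_subgroup K"
    unfolding compact_open_subgroup_def by blast+
  define part where "part a = (\<lambda>y. if y 0 \<in> (+) a ` K then f y else 0)" for a
  define h where "h a = G_act_fun act (Suc n) (- a) (part a)" for a
  have part: "part a \<in> Cc_infty (Gpow (Suc n))" for a
    unfolding part_def using f
    by (rule Cc_infty_restrict[OF _ locally_constant_mem_coset[OF \<open>open K\<close> \<open>is_subgroup K\<close>
          continuous_map_coordinate[OF zero_less_Suc]]])
  have h: "h a \<in> Cc_infty (Gpow (Suc n))" for a
    unfolding h_def using part by (rule G_act_fun_in_Cc_infty)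
  have "(\<Sum>a\<in>A. part a) = f"
    unfolding part_def by (rule sum_coset_parts[OF A(1,2)]) (rule supp)
  then have "f = (\<Sum>a\<in>A. part a)"
    by simp
  also have "\<dots> = (\<Sum>a\<in>A. G_act_fun act (Suc n) a (h a) - h a)"
  proof -
    have "G_act_fun act (Suc n) a (h a) = part a" for a
      unfolding h_def G_act_fun_plus using part by (simp add: G_act_fun_0)
    moreover have "(\<Sum>a\<in>A. h a) = 0"
      unfolding h_def part_def by (rule sum_translated_coset_parts[OF Tf K inv sum])
    ultimately show ?thesis
      by (simp add: sum_subtractf)
  qed
  also have "\<dots> \<in> fun_cspan sc {G_act_fun act (Suc n) g f - f | g f. f \<in> Cc_infty (Gpow (Suc n))}"
    using h by (intro F.span_sum F.span_base) blast
  finally show ?thesis .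
qed

lemma T_op_G_act_fun_diff:
  assumes f: "f \<in> Cc_infty (Gpow (Suc n))"
  shows "T_op sc M act n (G_act_fun act (Suc n) g f - f) = (\<lambda>_. 0)"
proof -
  have Gf: "G_act_fun act (Suc n) g f \<in> Cc_infty (Gpow (Suc n))"
    using f by (rule G_act_fun_in_Cc_infty)
  have mf: "(\<lambda>y. sc (- 1) (f y)) \<in> Cc_infty (Gpow (Suc n))"
    using Cc_infty_binop[OF f f, of "\<lambda>u _. sc (- 1) u"] by simp
  have "G_act_fun act (Suc n) g f - f = (\<lambda>y. G_act_fun act (Suc n) g f y + sc (- 1) (f y))"
    by (simp add: fun_eq_iff V.scale_minus_left)
  then have "T_op sc M act n (G_act_fun act (Suc n) g f - f)
      = (\<lambda>x. T_op sc M act n (G_act_fun act (Suc n) g f) x + T_op sc M act n (\<lambda>y. sc (- 1) (f y)) x)"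
    by (simp only: T_op_add[OF Gf mf])
  also have "\<dots> = (\<lambda>x. T_op sc M act n f x + sc (- 1) (T_op sc M act n f x))"
    by (simp only: T_op_G_act_fun[OF f] T_op_scale[OF f])
  also have "\<dots> = (\<lambda>_. 0)"
    by (simp add: V.scale_minus_left)
  finally show ?thesis .
qed

lemma span_subset_T_op_kernel:
  "fun_cspan sc {G_act_fun act (Suc n) g f - f | g f. f \<in> Cc_infty (Gpow (Suc n))}
     \<subseteq> {f \<in> Cc_infty (Gpow (Suc n)). T_op sc M act n f = (\<lambda>_. 0)}"
proof -
  interpret F: module "\<lambda>c (f :: (nat \<Rightarrow> 'g) \<Rightarrow> 'v) x. sc c (f x)"
    by (rule fun_module[OF V.vector_space_axioms])
  let ?ker = "{f \<in> Cc_infty (Gpow (Suc n)). T_op sc M act n f = (\<lambda>_. 0)}"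
  have "F.subspace ?ker"
  proof (rule F.subspaceI)
    show "0 \<in> ?ker"
      using zero_in_Cc_infty T_op_zero by (simp add: zero_fun_def)
    show "u + v \<in> ?ker" if "u \<in> ?ker" "v \<in> ?ker" for u v
      using that Cc_infty_binop[of u _ v "(+)"] by (simp add: plus_fun_def T_op_add)
    show "(\<lambda>y. sc c (u y)) \<in> ?ker" if "u \<in> ?ker" for c u
      using that Cc_infty_binop[of u _ u "\<lambda>a _. sc c a"] by (simp add: T_op_scale)
  qed
  moreover have "G_act_fun act (Suc n) g f - f \<in> ?ker" if "f \<in> Cc_infty (Gpow (Suc n))" for g f
    using Cc_infty_binop[OF G_act_fun_in_Cc_infty[OF that] that, of "(-)"] T_op_G_act_fun_diff[OF that]
    by (simp add: fun_diff_def)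
  then have "{G_act_fun act (Suc n) g f - f | g f. f \<in> Cc_infty (Gpow (Suc n))} \<subseteq> ?ker"
    by blast
  ultimately show ?thesis
    by (simp add: F.span_minimal)
qed

end

theorem mainTheorem14:
  fixes M :: "'g::{topological_group_add,t2_space} measure"
    and sc :: "complex \<Rightarrow> 'v::ab_group_add \<Rightarrow> 'v"
    and act :: "'g \<Rightarrow> 'v \<Rightarrow> 'v"
    and n :: nat
  assumes "l_group TYPE('g)"
    and "left_haar_measure M"
    and "smooth_module sc act"
    and "n \<ge> 1"
  shows "T_op sc M act n ` Cc_infty (Gpow (Suc n)) = Cc_infty (Gpow n) \<and>
         {f \<in> Cc_infty (Gpow (Suc n)). T_op sc M act n f = (\<lambda>_. 0)}
         = fun_cspan sc {G_act_fun act (Suc n) g f - f | g f. f \<in> Cc_infty (Gpow (Suc n))}"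
proof -
  interpret l_group_representation sc act M
    by unfold_locales (fact assms)+
  have "T_op sc M act n ` Cc_infty (Gpow (Suc n)) = Cc_infty (Gpow n)"
    using T_op_in_Cc_infty Cc_infty_subset_T_op_image by (meson image_subsetI subset_antisym)
  moreover have "{f \<in> Cc_infty (Gpow (Suc n)). T_op sc M act n f = (\<lambda>_. 0)}
      = fun_cspan sc {G_act_fun act (Suc n) g f - f | g f. f \<in> Cc_infty (Gpow (Suc n))}"
    using T_op_kernel_subset_span span_subset_T_op_kernel by blast
  ultimately show ?thesis ..
qed

end
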